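(* Under $H_0$ and Method $\mathcal{M}$ (with the assumptions of the context), $\frac{N_{1,n}}{N_{0,n}}\to 0$ in probability as $n\to\infty$.
   Context: Two independent i.i.d. data streams $\mathcal{X}\sim f_0$, $\mathcal{Y}\sim f_1$ (this is $H_0$), $f_0\ne f_1$ continuous densities, with $\log(f_0/f_1)$ having finite positive variance under both $f_0$ and $f_1$. Method $\mathcal{M}$: start with one observation from each stream; at step $n$, with $N_{0,n},N_{1,n}$ observations from $\mathcal{X},\mathcal{Y}$ ($N_{0,n}+N_{1,n}=n$), let $U_1,\dots,U_{n_{\max}}$ be the observations of the stream with $n_{\max}=\max\{N_{0,n},N_{1,n}\}$ observations (ties broken by a fair coin); sample next from that stream if $\sum_{i\le n_{\max}}\log\frac{f_0(U_i)}{f_1(U_i)}>0$, from the other stream if it is $<0$, and from either with probability $1/2$ if it is $=0$. *)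

theory Defs
  imports "HOL-Probability.Probability"
begin

definition llr :: "(real \<Rightarrow> real) \<Rightarrow> (real \<Rightarrow> real) \<Rightarrow> real \<Rightarrow> real" where
  "llr f0 f1 u = ln (f0 u / f1 u)"

(* Method M, run on a fixed sample path.
   x j (j = 0,1,...) : observations of stream X (the j+1-th one sampled from X);
   y j               : observations of stream Y;
   c n               : fair coin used at step n to break a tie N_{0,n} = N_{1,n}
                       (c n = 1 means: take stream X as the "max" stream);
   d n               : fair coin used at step n when the LLR sum is exactly 0
                       (d n = 1 means: sample from the max stream).
   method_state ... k = (N_{0,n}, N_{1,n}) at step n = k + 2
   (the method starts at n = 2 with one observation from each stream). *)
fun method_state ::
  "(real \<Rightarrow> real) \<Rightarrow> (real \<Rightarrow> real) \<Rightarrow> (nat \<Rightarrow> real) \<Rightarrow> (nat \<Rightarrow> real)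
   \<Rightarrow> (nat \<Rightarrow> real) \<Rightarrow> (nat \<Rightarrow> real) \<Rightarrow> nat \<Rightarrow> nat \<times> nat" where
  "method_state f0 f1 x y c d 0 = (1, 1)"
| "method_state f0 f1 x y c d (Suc k) =
     (let (a, b) = method_state f0 f1 x y c d k;
          n = a + b;
          i = (if a > b then (0::nat) else if b > a then 1 else if c n = 1 then 0 else 1);
          S = (if i = 0 then (\<Sum>j<a. llr f0 f1 (x j)) else (\<Sum>j<b. llr f0 f1 (y j)));
          nxt = (if S > 0 then i else if S < 0 then 1 - i else if d n = 1 then i else 1 - i)
      in if nxt = 0 then (a + 1, b) else (a, b + 1))"

(* (N_{0,n}, N_{1,n}) at step n (meaningful for n \<ge> 2). *)
definition method_counts ::
  "(real \<Rightarrow> real) \<Rightarrow> (real \<Rightarrow> real) \<Rightarrow> (nat \<Rightarrow> real) \<Rightarrow> (nat \<Rightarrow> real)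
   \<Rightarrow> (nat \<Rightarrow> real) \<Rightarrow> (nat \<Rightarrow> real) \<Rightarrow> nat \<Rightarrow> nat \<times> nat" where
  "method_counts f0 f1 x y c d n = method_state f0 f1 x y c d (n - 2)"

(* Labels of the four independent families of random variables. *)
datatype src = SrcX | SrcY | SrcC | SrcD

definition is_density :: "(real \<Rightarrow> real) \<Rightarrow> bool" where
  "is_density f \<longleftrightarrow> (\<forall>x. 0 \<le> f x) \<and> f \<in> borel_measurable borel
      \<and> (\<integral>\<^sup>+ x. ennreal (f x) \<partial>lborel) = 1"

end

theory Submission
  imports Defs "HOL-Library.Discrete_Functions"
begin

(* Under H_0 the log-likelihood ratio has mean KL(f_0 || f_1) > 0 under f_0 and mean
   -KL(f_1 || f_0) < 0 under f_1; the strict Gibbs inequality needs the positive variance.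
   Chebyshev bounds for the partial sums over the blocks [r^2, (r+1)^2) are summable in r,
   so by Borel-Cantelli the LLR partial sums of X are almost surely eventually positive and
   those of Y eventually negative.  Once both hold from K observations on, the method samples
   X whenever Y has K observations, whichever stream leads; hence N_1 never exceeds K and
   N_1 / N_0 -> 0 almost surely, which implies convergence in probability. *)

section \<open>Trajectories of method M\<close>

declare method_state.simps(2) [simp del]

lemma method_state_Suc_cases:
  assumes "method_state f0 f1 x y c d k = (a, b)"
  shows "method_state f0 f1 x y c d (Suc k) = (a + 1, b) \<or>
         method_state f0 f1 x y c d (Suc k) = (a, b + 1)"
  using assms by (auto simp: method_state.simps(2) Let_def)

lemma method_state_Suc_eq_sample_X:
  assumes ab: "method_state f0 f1 x y c d k = (a, b)"
    and x: "b \<le> a \<Longrightarrow> 0 < (\<Sum>j<a. llr f0 f1 (x j))"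
    and y: "a \<le> b \<Longrightarrow> (\<Sum>j<b. llr f0 f1 (y j)) < 0"
  shows "method_state f0 f1 x y c d (Suc k) = (a + 1, b)"
proof -
  note unfold_step = method_state.simps(2) ab Let_def prod.case if_True if_False if_P if_not_P
  consider "b < a" | "a < b" | "a = b" "c (a + b) = 1" | "a = b" "c (a + b) \<noteq> 1"
    by fastforce
  then show ?thesis
  proof cases
    case 1
    with x have "0 < (\<Sum>j<a. llr f0 f1 (x j))" by simp
    with 1 show ?thesis by (simp only: unfold_step)
  next
    case 2
    with y have "(\<Sum>j<b. llr f0 f1 (y j)) < 0" "\<not> 0 < (\<Sum>j<b. llr f0 f1 (y j))" "\<not> b < a"
      by simp_all
    with 2 show ?thesis by (simp only: unfold_step)
  next
    case 3
    with x have "0 < (\<Sum>j<a. llr f0 f1 (x j))" "\<not> b < a" "\<not> a < b" by simp_all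
    with 3 show ?thesis by (simp only: unfold_step)
  next
    case 4
    with y have "(\<Sum>j<b. llr f0 f1 (y j)) < 0" "\<not> 0 < (\<Sum>j<b. llr f0 f1 (y j))"
      "\<not> b < a" "\<not> a < b"
      by simp_all
    with 4 show ?thesis by (simp only: unfold_step)
  qed
qed

lemma fst_plus_snd_method_state:
  "fst (method_state f0 f1 x y c d k) + snd (method_state f0 f1 x y c d k) = k + 2"
proof (induction k)
  case (Suc k)
  obtain a b where "method_state f0 f1 x y c d k = (a, b)" by fastforce
  with Suc show ?case using method_state_Suc_cases by fastforce
qed simp

lemma snd_method_state_le:
  assumes "1 \<le> K"
    and x: "\<And>m. K \<le> m \<Longrightarrow> 0 < (\<Sum>j<m. llr f0 f1 (x j))"
    and y: "\<And>m. K \<le> m \<Longrightarrow> (\<Sum>j<m. llr f0 f1 (y j)) < 0"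
  shows "snd (method_state f0 f1 x y c d k) \<le> K"
proof (induction k)
  case 0
  show ?case using \<open>1 \<le> K\<close> by simp
next
  case (Suc k)
  obtain a b where ab: "method_state f0 f1 x y c d k = (a, b)" by fastforce
  show ?case
  proof (cases "b < K")
    case True
    then show ?thesis using method_state_Suc_cases[OF ab] by auto
  next
    case False
    with Suc ab have "b = K" by simp
    with ab x y have "method_state f0 f1 x y c d (Suc k) = (a + 1, b)"
      by (intro method_state_Suc_eq_sample_X) auto
    with \<open>b = K\<close> show ?thesis by simp
  qed
qed

lemma method_counts_ratio_tendsto_0:
  assumes x: "eventually (\<lambda>m. 0 < (\<Sum>j<m. llr f0 f1 (x j))) sequentially"
    and y: "eventually (\<lambda>m. (\<Sum>j<m. llr f0 f1 (y j)) < 0) sequentially"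
  shows "(\<lambda>n. real (snd (method_counts f0 f1 x y c d n)) / real (fst (method_counts f0 f1 x y c d n)))
           \<longlonglongrightarrow> 0"
proof -
  from eventually_conj[OF x y] obtain N where N:
    "\<And>m. N \<le> m \<Longrightarrow> 0 < (\<Sum>j<m. llr f0 f1 (x j)) \<and> (\<Sum>j<m. llr f0 f1 (y j)) < 0"
    by (auto simp: eventually_sequentially)
  define K where "K = max N 1"
  have snd_le: "snd (method_counts f0 f1 x y c d n) \<le> K" for n
    unfolding method_counts_def by (rule snd_method_state_le) (use N in \<open>auto simp: K_def\<close>)
  have fst_ge: "n - K \<le> fst (method_counts f0 f1 x y c d n)" if "2 \<le> n" for n
    using fst_plus_snd_method_state[of f0 f1 x y c d "n - 2"] snd_le[of n] that
    unfolding method_counts_def by linarith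
  have bound: "eventually (\<lambda>n. real (snd (method_counts f0 f1 x y c d n)) /
      real (fst (method_counts f0 f1 x y c d n)) \<le> real K / real (n - K)) sequentially"
  proof (rule eventually_sequentiallyI)
    fix n assume "K + 2 \<le> n"
    then show "real (snd (method_counts f0 f1 x y c d n)) / real (fst (method_counts f0 f1 x y c d n))
          \<le> real K / real (n - K)"
      using snd_le[of n] fst_ge[of n] by (intro frac_le) auto
  qed
  have "filterlim (\<lambda>n. real (n - K)) at_top sequentially"
    by (rule filterlim_compose[OF filterlim_real_sequentially filterlim_minus_const_nat_at_top])
  then have lim: "(\<lambda>n. real K / real (n - K)) \<longlonglongrightarrow> 0"
    by (rule tendsto_divide_0[OF tendsto_const filterlim_at_top_imp_at_infinity])
  show ?thesis
    by (rule real_tendsto_sandwich[OF always_eventually bound tendsto_const lim]) simp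
qed

section \<open>Convergence in probability and independent sums\<close>

lemma (in prob_space) prob_tendsto_0_if_AE_eventually_not_in:
  assumes "AE \<omega> in M. eventually (\<lambda>n. \<omega> \<notin> A n) sequentially"
  shows "(\<lambda>n. prob (A n)) \<longlonglongrightarrow> 0"
proof -
  \<comment> \<open>A non-measurable \<open>A n\<close> has probability 0 by convention, so it may be replaced by \<open>{}\<close>.\<close>
  define A' where "A' n = (if A n \<in> events then A n else {})" for n
  define B where "B n = (\<Union>m\<in>{n..}. A' m)" for n
  have A'_events: "A' n \<in> events" for n
    unfolding A'_def by simp
  have B_events: "B n \<in> events" for n
    unfolding B_def using A'_events by auto
  have "decseq B"
    unfolding B_def decseq_def by (fastforce intro: order_trans)
  then have "(\<lambda>n. prob (B n)) \<longlonglongrightarrow> prob (\<Inter>n. B n)"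
    using B_events by (intro finite_Lim_measure_decseq) auto
  moreover have "prob (\<Inter>n. B n) = 0"
  proof -
    have "prob (\<Inter>n. B n) \<le> prob {}"
    proof (rule finite_measure_mono_AE)
      show "AE \<omega> in M. \<omega> \<in> (\<Inter>n. B n) \<longrightarrow> \<omega> \<in> {}"
        using assms
        by eventually_elim (auto simp: B_def A'_def eventually_sequentially split: if_splits)
    qed simp
    then show ?thesis
      by (metis antisym measure_empty measure_nonneg)
  qed
  ultimately have B_lim: "(\<lambda>n. prob (B n)) \<longlonglongrightarrow> 0"
    by simp
  have A_le_B: "prob (A n) \<le> prob (B n)" for n
  proof -
    have "prob (A n) = prob (A' n)"
      unfolding A'_def by (simp add: measure_notin_sets)
    also have "\<dots> \<le> prob (B n)"
      using B_events by (intro finite_measure_mono) (auto simp: B_def)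
    finally show ?thesis .
  qed
  show ?thesis
    using A_le_B
    by (intro real_tendsto_sandwich[OF always_eventually always_eventually tendsto_const B_lim]) auto
qed

lemma (in prob_space) tendsto_in_probability_if_AE_tendsto:
  fixes Z :: "nat \<Rightarrow> 'a \<Rightarrow> real"
  assumes "AE \<omega> in M. (\<lambda>n. Z n \<omega>) \<longlonglongrightarrow> L"
  shows "\<forall>\<epsilon>>0. (\<lambda>n. prob {\<omega> \<in> space M. \<bar>Z n \<omega> - L\<bar> > \<epsilon>}) \<longlonglongrightarrow> 0"
proof (intro allI impI prob_tendsto_0_if_AE_eventually_not_in)
  fix \<epsilon> :: real
  assume "0 < \<epsilon>"
  show "AE \<omega> in M. eventually (\<lambda>n. \<omega> \<notin> {\<omega> \<in> space M. \<bar>Z n \<omega> - L\<bar> > \<epsilon>}) sequentially"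
    using assms
  proof eventually_elim
    case (elim \<omega>)
    then have "eventually (\<lambda>n. dist (Z n \<omega>) L < \<epsilon>) sequentially"
      using \<open>0 < \<epsilon>\<close> by (rule tendstoD)
    then show ?case
      by eventually_elim (auto simp: dist_real_def)
  qed
qed

lemma (in prob_space) indep_sets_reindex:
  assumes indep: "indep_sets F I" and "inj_on g J" "g ` J \<subseteq> I"
  shows "indep_sets (\<lambda>j. F (g j)) J"
proof (rule indep_setsI)
  fix j assume "j \<in> J"
  then show "F (g j) \<subseteq> events"
    using indep \<open>g ` J \<subseteq> I\<close> unfolding indep_sets_def by auto
next
  fix A J'
  assume J': "J' \<noteq> {}" "J' \<subseteq> J" "finite J'" and A: "\<forall>j\<in>J'. A j \<in> F (g j)"
  have inj: "inj_on g J'"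
    using \<open>inj_on g J\<close> J' inj_on_subset by blast
  define B where "B i = A (the_inv_into J' g i)" for i
  have B_g: "B (g j) = A j" if "j \<in> J'" for j
    unfolding B_def using inj that by (simp add: the_inv_into_f_f)
  have "g ` J' \<subseteq> I"
    using J' \<open>g ` J \<subseteq> I\<close> by blast
  then have "prob (\<Inter>i\<in>g ` J'. B i) = (\<Prod>i\<in>g ` J'. prob (B i))"
    using J' A B_g by (intro indep_setsD[OF indep]) auto
  then show "prob (\<Inter>j\<in>J'. A j) = (\<Prod>j\<in>J'. prob (A j))"
    using B_g by (simp add: prod.reindex[OF inj])
qed

lemma (in prob_space) indep_vars_reindex:
  assumes "indep_vars M' X I" "inj_on g J" "g ` J \<subseteq> I"
  shows "indep_vars (\<lambda>j. M' (g j)) (\<lambda>j. X (g j)) J"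
  using assms indep_sets_reindex[of "\<lambda>i. {X i -` A \<inter> space M | A. A \<in> sets (M' i)}" I g J]
  unfolding indep_vars_def2 by auto

lemma (in prob_space)
  fixes W :: "'i \<Rightarrow> 'a \<Rightarrow> real"
  assumes indep: "indep_vars (\<lambda>_. borel) W I" and "finite I"
    and sq: "\<And>i. i \<in> I \<Longrightarrow> integrable M (\<lambda>\<omega>. (W i \<omega>)\<^sup>2)"
    and centered: "\<And>i. i \<in> I \<Longrightarrow> expectation (W i) = 0"
  shows integrable_square_sum_indep_centered: "integrable M (\<lambda>\<omega>. (\<Sum>i\<in>I. W i \<omega>)\<^sup>2)"
    and expectation_square_sum_indep_centered:
      "expectation (\<lambda>\<omega>. (\<Sum>i\<in>I. W i \<omega>)\<^sup>2) = (\<Sum>i\<in>I. expectation (\<lambda>\<omega>. (W i \<omega>)\<^sup>2))"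
proof -
  have integrable: "integrable M (W i)" if "i \<in> I" for i
    using indep that sq[OF that] unfolding indep_vars_def
    by (auto intro: square_integrable_imp_integrable)
  have products: "integrable M (\<lambda>\<omega>. W i \<omega> * W j \<omega>) \<and>
      expectation (\<lambda>\<omega>. W i \<omega> * W j \<omega>) = (if i = j then expectation (\<lambda>\<omega>. (W i \<omega>)\<^sup>2) else 0)"
    if "i \<in> I" "j \<in> I" for i j
  proof (cases "i = j")
    case True
    then show ?thesis using sq[OF that(1)] by (simp add: power2_eq_square)
  next
    case False
    have "indep_vars (\<lambda>_. borel) W {i, j}"
      using indep_vars_subset[OF indep] that by auto
    moreover have "(\<lambda>\<omega>. W i \<omega> * W j \<omega>) = (\<lambda>\<omega>. \<Prod>k\<in>{i, j}. W k \<omega>)"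
      using False by auto
    ultimately show ?thesis
      using indep_vars_lebesgue_integral[of "{i, j}" W] indep_vars_integrable[of "{i, j}" W]
        integrable centered that False by auto
  qed
  have square: "(\<lambda>\<omega>. (\<Sum>i\<in>I. W i \<omega>)\<^sup>2) = (\<lambda>\<omega>. \<Sum>i\<in>I. \<Sum>j\<in>I. W i \<omega> * W j \<omega>)"
    by (simp add: power2_eq_square sum_product)
  show "integrable M (\<lambda>\<omega>. (\<Sum>i\<in>I. W i \<omega>)\<^sup>2)"
    unfolding square using products by auto
  show "expectation (\<lambda>\<omega>. (\<Sum>i\<in>I. W i \<omega>)\<^sup>2) = (\<Sum>i\<in>I. expectation (\<lambda>\<omega>. (W i \<omega>)\<^sup>2))"
    unfolding square using products \<open>finite I\<close> by (simp add: Bochner_Integration.integral_sum)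
qed

lemma (in prob_space) Chebyshev_sum_indep:
  fixes Z :: "'i \<Rightarrow> 'a \<Rightarrow> real"
  assumes indep: "indep_vars (\<lambda>_. borel) Z I" and "finite I"
    and sq: "\<And>i. i \<in> I \<Longrightarrow> integrable M (\<lambda>\<omega>. (Z i \<omega>)\<^sup>2)"
    and "0 < a"
  shows "prob {\<omega> \<in> space M. a \<le> \<bar>\<Sum>i\<in>I. (Z i \<omega> - expectation (Z i))\<bar>}
           \<le> (\<Sum>i\<in>I. variance (Z i)) / a\<^sup>2"
proof -
  define W where "W i \<omega> = Z i \<omega> - expectation (Z i)" for i \<omega>
  have Z_borel: "random_variable borel (Z i)" if "i \<in> I" for i
    using indep that unfolding indep_vars_def by auto
  have Z_integrable: "integrable M (Z i)" if "i \<in> I" for i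
    using Z_borel[OF that] sq[OF that] by (rule square_integrable_imp_integrable)
  have W_integrable: "integrable M (W i)" if "i \<in> I" for i
    unfolding W_def using Z_integrable[OF that] by simp
  have indep_W: "indep_vars (\<lambda>_. borel) W I"
    unfolding W_def using indep_vars_compose2[OF indep, of "\<lambda>i x. x - expectation (Z i)" "\<lambda>_. borel"]
    by simp
  have sq_W: "integrable M (\<lambda>\<omega>. (W i \<omega>)\<^sup>2)" if "i \<in> I" for i
    using sq[OF that] Z_integrable[OF that] by (simp add: W_def power2_diff)
  have centered_W: "expectation (W i) = 0" if "i \<in> I" for i
    using Z_integrable[OF that] by (simp add: W_def[abs_def] prob_space)
  have "expectation (\<lambda>\<omega>. \<Sum>i\<in>I. W i \<omega>) = 0"
    using W_integrable centered_W by (simp add: Bochner_Integration.integral_sum)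
  moreover have "prob {\<omega> \<in> space M. a \<le> \<bar>(\<Sum>i\<in>I. W i \<omega>) - expectation (\<lambda>\<omega>. \<Sum>i\<in>I. W i \<omega>)\<bar>}
      \<le> variance (\<lambda>\<omega>. \<Sum>i\<in>I. W i \<omega>) / a\<^sup>2"
    using integrable_square_sum_indep_centered[OF indep_W \<open>finite I\<close> sq_W centered_W]
      W_integrable \<open>0 < a\<close>
    by (intro Chebyshev_inequality) (auto dest: borel_measurable_integrable)
  ultimately show ?thesis
    using expectation_square_sum_indep_centered[OF indep_W \<open>finite I\<close> sq_W centered_W]
    by (simp add: W_def)
qed

lemma (in prob_space) not_AE_eq_const_if_variance_pos:
  fixes X :: "'a \<Rightarrow> real"
  assumes [measurable]: "random_variable borel X" and "0 < variance X"
  shows "\<not> (AE \<omega> in M. X \<omega> = c)"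
proof
  assume const: "AE \<omega> in M. X \<omega> = c"
  then have "expectation X = expectation (\<lambda>_. c)"
    by (intro integral_cong_AE) auto
  with const have "variance X = expectation (\<lambda>_. 0)"
    by (intro integral_cong_AE) (auto simp: prob_space)
  with \<open>0 < variance X\<close> show False
    by simp
qed

section \<open>Partial sums with positive drift\<close>

lemma nonpos_partial_sum_imp_deviation:
  fixes z :: "nat \<Rightarrow> real"
  assumes "n \<le> m" and "0 \<le> \<mu>" and "(\<Sum>j<m. z j) \<le> 0"
  shows "real n * \<mu> / 2 \<le> \<bar>\<Sum>j<n. (z j - \<mu>)\<bar> \<or> real n * \<mu> / 2 \<le> \<bar>\<Sum>j\<in>{n..<m}. (z j - \<mu>)\<bar>"
proof -
  have "(\<Sum>j<m. (z j - \<mu>)) = (\<Sum>j<n. (z j - \<mu>)) + (\<Sum>j\<in>{n..<m}. (z j - \<mu>))"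
    using \<open>n \<le> m\<close> by (metis lessThan_atLeast0 sum.atLeastLessThan_concat zero_le)
  moreover have "(\<Sum>j<m. (z j - \<mu>)) = (\<Sum>j<m. z j) - real m * \<mu>"
    by (simp add: sum_subtractf)
  moreover have "real n * \<mu> \<le> real m * \<mu>"
    using assms by (intro mult_right_mono) auto
  ultimately show ?thesis
    using \<open>(\<Sum>j<m. z j) \<le> 0\<close> by arith
qed

lemma (in prob_space) prob_partial_sum_nonpos_in_block:
  fixes Z :: "nat \<Rightarrow> 'a \<Rightarrow> real"
  assumes indep: "indep_vars (\<lambda>_. borel) Z UNIV"
    and sq: "\<And>j. integrable M (\<lambda>\<omega>. (Z j \<omega>)\<^sup>2)"
    and mean: "\<And>j. expectation (Z j) = \<mu>" and "0 < \<mu>"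
    and var: "\<And>j. variance (Z j) \<le> v"
    and "1 \<le> r"
  shows "prob {\<omega> \<in> space M. \<exists>m \<in> {r\<^sup>2..<(Suc r)\<^sup>2}. (\<Sum>j<m. Z j \<omega>) \<le> 0}
           \<le> 40 * v / (\<mu> * real r)\<^sup>2"
proof -
  define a where "a = (real r)\<^sup>2 * \<mu> / 2"
  define dev where "dev I = {\<omega> \<in> space M. a \<le> \<bar>\<Sum>j\<in>I. (Z j \<omega> - \<mu>)\<bar>}" for I
  let ?block = "{r\<^sup>2..<(Suc r)\<^sup>2}"
  have [measurable]: "random_variable borel (Z j)" for j
    using indep unfolding indep_vars_def by auto
  have dev_events: "dev I \<in> events" for I
    unfolding dev_def by measurable
  have "0 \<le> v"
    using var[of 0] variance_positive[of "Z 0"] by linarith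
  have "0 < a"
    using \<open>1 \<le> r\<close> \<open>0 < \<mu>\<close> by (simp add: a_def)
  have prob_dev: "prob (dev I) \<le> card I * v / a\<^sup>2" if "finite I" for I
  proof -
    have "prob (dev I) \<le> (\<Sum>j\<in>I. variance (Z j)) / a\<^sup>2"
      using Chebyshev_sum_indep[OF indep_vars_subset[OF indep subset_UNIV] that sq \<open>0 < a\<close>]
      by (simp add: dev_def mean)
    also have "\<dots> \<le> card I * v / a\<^sup>2"
      using sum_bounded_above[of I _ v, OF var] by (intro divide_right_mono) auto
    finally show ?thesis .
  qed
  have "{\<omega> \<in> space M. \<exists>m \<in> ?block. (\<Sum>j<m. Z j \<omega>) \<le> 0}
      \<subseteq> dev {..<r\<^sup>2} \<union> (\<Union>m\<in>?block. dev {r\<^sup>2..<m})"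
    using nonpos_partial_sum_imp_deviation[of "r\<^sup>2" _ \<mu>] \<open>0 < \<mu>\<close>
    by (fastforce simp: dev_def a_def)
  then have "prob {\<omega> \<in> space M. \<exists>m \<in> ?block. (\<Sum>j<m. Z j \<omega>) \<le> 0}
      \<le> prob (dev {..<r\<^sup>2} \<union> (\<Union>m\<in>?block. dev {r\<^sup>2..<m}))"
    using dev_events by (intro finite_measure_mono) auto
  also have "\<dots> \<le> prob (dev {..<r\<^sup>2}) + (\<Sum>m\<in>?block. prob (dev {r\<^sup>2..<m}))"
    using dev_events
    by (intro order_trans[OF measure_Un_le] add_left_mono finite_measure_subadditive_finite) auto
  also have "\<dots> \<le> (real r)\<^sup>2 * v / a\<^sup>2 + (\<Sum>m\<in>?block. (2 * real r + 1) * v / a\<^sup>2)"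
  proof (intro add_mono sum_mono)
    show "prob (dev {..<r\<^sup>2}) \<le> (real r)\<^sup>2 * v / a\<^sup>2"
      using prob_dev[of "{..<r\<^sup>2}"] by simp
  next
    fix m assume "m \<in> ?block"
    then have "card {r\<^sup>2..<m} \<le> 2 * r + 1"
      by (auto simp: power2_eq_square)
    then have "real (card {r\<^sup>2..<m}) \<le> 2 * real r + 1"
      using of_nat_mono by fastforce
    then have "card {r\<^sup>2..<m} * v / a\<^sup>2 \<le> (2 * real r + 1) * v / a\<^sup>2"
      using \<open>0 \<le> v\<close> by (intro divide_right_mono mult_right_mono) auto
    then show "prob (dev {r\<^sup>2..<m}) \<le> (2 * real r + 1) * v / a\<^sup>2"
      using prob_dev[of "{r\<^sup>2..<m}"] by simp
  qed
  also have "\<dots> = ((real r)\<^sup>2 + (2 * real r + 1)\<^sup>2) * v / a\<^sup>2"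
    by (simp add: power2_eq_square algebra_simps add_divide_distrib)
  also have "\<dots> \<le> 10 * (real r)\<^sup>2 * v / a\<^sup>2"
  proof -
    have "(2 * real r + 1)\<^sup>2 \<le> (3 * real r)\<^sup>2"
      using \<open>1 \<le> r\<close> by (intro power_mono) auto
    then show ?thesis
      using \<open>0 \<le> v\<close> by (intro divide_right_mono mult_right_mono) auto
  qed
  also have "\<dots> = 40 * v / (\<mu> * real r)\<^sup>2"
    using \<open>1 \<le> r\<close> \<open>0 < \<mu>\<close> by (simp add: a_def power2_eq_square field_simps)
  finally show ?thesis .
qed

lemma (in prob_space) AE_eventually_partial_sums_pos:
  fixes Z :: "nat \<Rightarrow> 'a \<Rightarrow> real"
  assumes indep: "indep_vars (\<lambda>_. borel) Z UNIV"
    and sq: "\<And>j. integrable M (\<lambda>\<omega>. (Z j \<omega>)\<^sup>2)"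
    and mean: "\<And>j. expectation (Z j) = \<mu>" and "0 < \<mu>"
    and var: "\<And>j. variance (Z j) \<le> v"
  shows "AE \<omega> in M. eventually (\<lambda>m. 0 < (\<Sum>j<m. Z j \<omega>)) sequentially"
proof -
  define B where "B r = {\<omega> \<in> space M. \<exists>m \<in> {r\<^sup>2..<(Suc r)\<^sup>2}. (\<Sum>j<m. Z j \<omega>) \<le> 0}" for r
  have [measurable]: "random_variable borel (Z j)" for j
    using indep unfolding indep_vars_def by auto
  have B_events: "B r \<in> events" for r
    unfolding B_def by measurable
  have "summable (\<lambda>r. prob (B r))"
  proof (rule summable_comparison_test')
    show "summable (\<lambda>r. 40 * v / \<mu>\<^sup>2 * inverse (real r ^ 2))"
      by (intro summable_mult inverse_power_summable) simp
    show "norm (prob (B r)) \<le> 40 * v / \<mu>\<^sup>2 * inverse (real r ^ 2)" if "1 \<le> r" for r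
      using prob_partial_sum_nonpos_in_block[OF assms that]
      by (simp add: B_def power_mult_distrib field_simps)
  qed
  then have "AE \<omega> in M. eventually (\<lambda>r. \<omega> \<in> space M - B r) sequentially"
    using B_events by (intro borel_cantelli_AE1) (auto simp: emeasure_finite less_top[symmetric])
  then show ?thesis
  proof eventually_elim
    case (elim \<omega>)
    then obtain R where R: "\<And>r. R \<le> r \<Longrightarrow> \<omega> \<in> space M - B r"
      by (auto simp: eventually_sequentially)
    have "0 < (\<Sum>j<m. Z j \<omega>)" if "R\<^sup>2 \<le> m" for m
    proof -
      have "R \<le> floor_sqrt m"
        using that by (rule le_floor_sqrtI)
      moreover have "m \<in> {(floor_sqrt m)\<^sup>2..<(Suc (floor_sqrt m))\<^sup>2}"
        using Suc_floor_sqrt_power2_gt[of m] by simp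
      ultimately show ?thesis
        using R[of "floor_sqrt m"] by (auto simp: B_def not_le)
    qed
    then show ?case
      by (auto simp: eventually_sequentially)
  qed
qed

section \<open>Log-likelihood ratios\<close>

abbreviation dens_measure :: "(real \<Rightarrow> real) \<Rightarrow> real measure" where
  "dens_measure g \<equiv> density lborel (\<lambda>u. ennreal (g u))"

lemma llr_swap: "llr f1 f0 = (\<lambda>u. - llr f0 f1 u)"
  unfolding llr_def by (metis inverse_divide ln_inverse)

lemma measurable_llr [measurable]:
  assumes [measurable]: "f0 \<in> borel_measurable borel" "f1 \<in> borel_measurable borel"
  shows "llr f0 f1 \<in> borel_measurable borel"
  unfolding llr_def[abs_def] by measurable

lemma
  assumes "is_density g"
  shows is_density_nonneg: "0 \<le> g u"
    and is_density_measurable: "g \<in> borel_measurable borel"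
    and prob_space_dens_measure: "prob_space (dens_measure g)"
  using assms unfolding is_density_def by (auto intro!: prob_spaceI simp: emeasure_density)

lemma
  assumes d0: "is_density g0" and d1: "is_density g1"
  shows integrable_density_ratio: "integrable (dens_measure g0) (\<lambda>u. g1 u / g0 u)"
    and integral_density_ratio_le_1: "(\<integral>u. g1 u / g0 u \<partial>dens_measure g0) \<le> 1"
proof -
  have [measurable]: "g0 \<in> borel_measurable borel" "g1 \<in> borel_measurable borel"
    using d0 d1 by (simp_all add: is_density_measurable)
  have nonneg: "0 \<le> g0 u" "0 \<le> g1 u" for u
    using d0 d1 by (simp_all add: is_density_nonneg)
  have g1_integrable: "integrable lborel g1"
    using d1 nonneg by (intro integrableI_nonneg) (auto simp: is_density_def)
  have bound: "g0 u * (g1 u / g0 u) \<le> g1 u" for u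
    using nonneg[of u] by (cases "g0 u = 0") auto
  have ratio_integrable: "integrable lborel (\<lambda>u. g0 u * (g1 u / g0 u))"
    using nonneg bound by (intro Bochner_Integration.integrable_bound[OF g1_integrable]) auto
  then show "integrable (dens_measure g0) (\<lambda>u. g1 u / g0 u)"
    using nonneg by (subst integrable_density) auto
  have "(\<integral>u. g1 u / g0 u \<partial>dens_measure g0) = (\<integral>u. g0 u * (g1 u / g0 u) \<partial>lborel)"
    using nonneg by (subst integral_density) auto
  also have "\<dots> \<le> (\<integral>u. g1 u \<partial>lborel)"
    using ratio_integrable g1_integrable bound by (intro integral_mono) auto
  also have "\<dots> = 1"
    using d1 nonneg by (subst integral_eq_nn_integral) (auto simp: is_density_def)
  finally show "(\<integral>u. g1 u / g0 u \<partial>dens_measure g0) \<le> 1" .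
qed

lemma expectation_llr_pos:
  assumes d0: "is_density g0" and d1: "is_density g1"
    and pos: "AE u in dens_measure g0. 0 < g0 u \<and> 0 < g1 u"
    and llr_integrable: "integrable (dens_measure g0) (llr g0 g1)"
    and not_null: "\<not> (AE u in dens_measure g0. llr g0 g1 u = 0)"
  shows "0 < (\<integral>u. llr g0 g1 u \<partial>dens_measure g0)"
proof (rule ccontr)
  assume nonpos: "\<not> ?thesis"
  interpret P: prob_space "dens_measure g0"
    using d0 by (rule prob_space_dens_measure)
  define h where "h u = g1 u / g0 u" for u
  define q where "q u = h u - 1 + llr g0 g1 u" for u
  have llr_h: "llr g0 g1 u = - ln (h u)" for u
    unfolding llr_swap[of g0 g1] h_def by (simp add: llr_def)
  have h_integrable: "integrable (dens_measure g0) h"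
    unfolding h_def using d0 d1 by (rule integrable_density_ratio)
  have q_integrable: "integrable (dens_measure g0) q"
    unfolding q_def using h_integrable llr_integrable by auto
  \<comment> \<open>\<open>q \<ge> 0\<close> is \<open>ln h \<le> h - 1\<close>, while \<open>\<integral>q \<le> 0\<close> because \<open>\<integral>h \<le> 1\<close>.\<close>
  have q_nonneg: "AE u in dens_measure g0. 0 \<le> q u"
    using pos by eventually_elim (simp add: q_def llr_h h_def ln_le_minus_one)
  have "(\<integral>u. q u \<partial>dens_measure g0) \<le> 0"
    using nonpos integral_density_ratio_le_1[OF d0 d1, folded h_def] h_integrable llr_integrable
      P.prob_space
    by (simp add: q_def)
  then have "AE u in dens_measure g0. q u = 0"
    using integral_nonneg_eq_0_iff_AE[OF q_integrable q_nonneg] integral_nonneg_AE[OF q_nonneg]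
    by simp
  then have "AE u in dens_measure g0. llr g0 g1 u = 0"
    using pos
  proof eventually_elim
    case (elim u)
    then have "ln (h u) = h u - 1" and "0 < h u"
      by (simp_all add: q_def llr_h h_def)
    then show ?case
      by (simp add: llr_h ln_eq_minus_one)
  qed
  with not_null show False ..
qed

lemma (in prob_space)
  fixes X :: "'a \<Rightarrow> real" and L :: "real \<Rightarrow> real"
  assumes dist: "distributed M lborel X (\<lambda>u. ennreal (g u))"
    and [measurable]: "L \<in> borel_measurable borel"
  shows distributed_comp_square_integrable:
      "integrable (dens_measure g) (\<lambda>u. (L u)\<^sup>2) \<Longrightarrow> integrable M (\<lambda>\<omega>. (L (X \<omega>))\<^sup>2)"
    and distributed_comp_expectation:
      "expectation (\<lambda>\<omega>. L (X \<omega>)) = (\<integral>u. L u \<partial>dens_measure g)"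
    and distributed_comp_variance:
      "variance (\<lambda>\<omega>. L (X \<omega>)) = prob_space.variance (dens_measure g) L"
proof -
  have [measurable]: "X \<in> borel_measurable M"
    using distributed_measurable[OF dist] by simp
  have X_lborel: "X \<in> measurable M lborel"
    using dist by (rule distributed_measurable)
  have law: "dens_measure g = distr M lborel X"
    using dist by (rule distributed_distr_eq_density[symmetric])
  have "(\<lambda>u. (L u)\<^sup>2) \<in> borel_measurable lborel"
    by measurable
  then show "integrable (dens_measure g) (\<lambda>u. (L u)\<^sup>2) \<Longrightarrow> integrable M (\<lambda>\<omega>. (L (X \<omega>))\<^sup>2)"
    unfolding law by (simp add: integrable_distr_eq[OF X_lborel])
  show mean: "expectation (\<lambda>\<omega>. L (X \<omega>)) = (\<integral>u. L u \<partial>dens_measure g)"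
    unfolding law by (subst integral_distr) auto
  show "variance (\<lambda>\<omega>. L (X \<omega>)) = prob_space.variance (dens_measure g) L"
    unfolding mean unfolding law by (subst integral_distr) auto
qed

lemma (in prob_space) AE_eventually_llr_sums_pos:
  fixes Z :: "nat \<Rightarrow> 'a \<Rightarrow> real"
  assumes d0: "is_density g0" and d1: "is_density g1"
    and pos: "AE u in dens_measure g0. 0 < g0 u \<and> 0 < g1 u"
    and sq: "integrable (dens_measure g0) (\<lambda>u. (llr g0 g1 u)\<^sup>2)"
    and var: "0 < prob_space.variance (dens_measure g0) (llr g0 g1)"
    and dist: "\<And>j. distributed M lborel (Z j) (\<lambda>u. ennreal (g0 u))"
    and indep: "indep_vars (\<lambda>_. borel) Z UNIV"
  shows "AE \<omega> in M. eventually (\<lambda>m. 0 < (\<Sum>j<m. llr g0 g1 (Z j \<omega>))) sequentially"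
proof -
  interpret P: prob_space "dens_measure g0"
    using d0 by (rule prob_space_dens_measure)
  have [measurable]: "g0 \<in> borel_measurable borel" "g1 \<in> borel_measurable borel"
    using d0 d1 by (simp_all add: is_density_measurable)
  have "integrable (dens_measure g0) (llr g0 g1)"
    by (rule P.square_integrable_imp_integrable[OF _ sq]) measurable
  moreover have "\<not> (AE u in dens_measure g0. llr g0 g1 u = 0)"
    by (rule P.not_AE_eq_const_if_variance_pos[OF _ var]) measurable
  ultimately have "0 < (\<integral>u. llr g0 g1 u \<partial>dens_measure g0)"
    by (rule expectation_llr_pos[OF d0 d1 pos])
  moreover have "indep_vars (\<lambda>_. borel) (\<lambda>j \<omega>. llr g0 g1 (Z j \<omega>)) UNIV"
    using indep_vars_compose2[OF indep, of "\<lambda>_. llr g0 g1" "\<lambda>_. borel"] by simp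
  ultimately show ?thesis
    using distributed_comp_square_integrable[OF dist _ sq] distributed_comp_expectation[OF dist]
      distributed_comp_variance[OF dist]
    by (intro AE_eventually_partial_sums_pos[where v = "P.variance (llr g0 g1)"]) auto
qed

theorem mainTheorem4:
  fixes M :: "'a measure"
    and f0 f1 :: "real \<Rightarrow> real"
    and X Y C D :: "nat \<Rightarrow> 'a \<Rightarrow> real"
  assumes "prob_space M"
    and dens0: "is_density f0" and dens1: "is_density f1"
    and cont0: "continuous_on UNIV f0" and cont1: "continuous_on UNIV f1"
    and neq: "f0 \<noteq> f1"
    and pos0: "AE u in density lborel (\<lambda>u. ennreal (f0 u)). f0 u > 0 \<and> f1 u > 0"
    and pos1: "AE u in density lborel (\<lambda>u. ennreal (f1 u)). f0 u > 0 \<and> f1 u > 0"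
    and sq0: "integrable (density lborel (\<lambda>u. ennreal (f0 u))) (\<lambda>u. (llr f0 f1 u)\<^sup>2)"
    and sq1: "integrable (density lborel (\<lambda>u. ennreal (f1 u))) (\<lambda>u. (llr f0 f1 u)\<^sup>2)"
    and var0: "prob_space.variance (density lborel (\<lambda>u. ennreal (f0 u))) (llr f0 f1) > 0"
    and var1: "prob_space.variance (density lborel (\<lambda>u. ennreal (f1 u))) (llr f0 f1) > 0"
    and distX: "\<And>n. distributed M lborel (X n) (\<lambda>u. ennreal (f0 u))"
    and distY: "\<And>n. distributed M lborel (Y n) (\<lambda>u. ennreal (f1 u))"
    and coinC: "\<And>n. prob_space.prob M {\<omega> \<in> space M. C n \<omega> = 1} = 1/2 \<and>
                     prob_space.prob M {\<omega> \<in> space M. C n \<omega> = 0} = 1/2"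
    and coinD: "\<And>n. prob_space.prob M {\<omega> \<in> space M. D n \<omega> = 1} = 1/2 \<and>
                     prob_space.prob M {\<omega> \<in> space M. D n \<omega> = 0} = 1/2"
    and indep: "prob_space.indep_vars M (\<lambda>_. borel)
                  (\<lambda>(s, n). case s of SrcX \<Rightarrow> X n | SrcY \<Rightarrow> Y n | SrcC \<Rightarrow> C n | SrcD \<Rightarrow> D n)
                  UNIV"
  shows "\<forall>\<epsilon>>0. (\<lambda>n. prob_space.prob M {\<omega> \<in> space M.
            \<bar>real (snd (method_counts f0 f1 (\<lambda>j. X j \<omega>) (\<lambda>j. Y j \<omega>) (\<lambda>j. C j \<omega>) (\<lambda>j. D j \<omega>) n))
             / real (fst (method_counts f0 f1 (\<lambda>j. X j \<omega>) (\<lambda>j. Y j \<omega>) (\<lambda>j. C j \<omega>) (\<lambda>j. D j \<omega>) n))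
             - 0\<bar> > \<epsilon>}) \<longlonglongrightarrow> 0"
proof -
  interpret prob_space M by fact
  have indep_X: "indep_vars (\<lambda>_. borel) X UNIV"
    using indep_vars_reindex[OF indep, of "\<lambda>j. (SrcX, j)" UNIV] by (simp add: inj_on_def)
  have indep_Y: "indep_vars (\<lambda>_. borel) Y UNIV"
    using indep_vars_reindex[OF indep, of "\<lambda>j. (SrcY, j)" UNIV] by (simp add: inj_on_def)
  have "AE \<omega> in M. eventually (\<lambda>m. 0 < (\<Sum>j<m. llr f0 f1 (X j \<omega>))) sequentially"
    by (rule AE_eventually_llr_sums_pos[OF dens0 dens1 pos0 sq0 var0 distX indep_X])
  moreover have "AE \<omega> in M. eventually (\<lambda>m. 0 < (\<Sum>j<m. llr f1 f0 (Y j \<omega>))) sequentially"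
  proof (rule AE_eventually_llr_sums_pos[OF dens1 dens0 _ _ _ distY indep_Y])
    show "AE u in dens_measure f1. 0 < f1 u \<and> 0 < f0 u"
      using pos1 by eventually_elim auto
  qed (use sq1 var1 in \<open>simp_all add: llr_swap[of f1 f0] power2_commute\<close>)
  ultimately have "AE \<omega> in M. (\<lambda>n.
      real (snd (method_counts f0 f1 (\<lambda>j. X j \<omega>) (\<lambda>j. Y j \<omega>) (\<lambda>j. C j \<omega>) (\<lambda>j. D j \<omega>) n))
      / real (fst (method_counts f0 f1 (\<lambda>j. X j \<omega>) (\<lambda>j. Y j \<omega>) (\<lambda>j. C j \<omega>) (\<lambda>j. D j \<omega>) n)))
      \<longlonglongrightarrow> 0"
    by eventually_elim (rule method_counts_ratio_tendsto_0; simp add: llr_swap[of f1 f0] sum_negf)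
  then show ?thesis
    by (rule tendsto_in_probability_if_AE_tendsto)
qed

end
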